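(* Let $n\ge 1$ and $G\in\mathcal{G}_{2n}$ with $F(G)=n-1$. Then the forcing spectrum of $G$ is continuous, i.e. $\{f(G,M): M \text{ a perfect matching of } G\}=\{f(G), f(G)+1,\dots, n-1\}$.
   Context: All graphs are finite and simple. $\mathcal{G}_{2n}$ denotes the set of all graphs with $2n$ vertices that have a perfect matching. For a perfect matching $M$ of $G$, a forcing set of $M$ is a subset $S\subseteq M$ contained in no other perfect matching of $G$; $f(G,M)$ is the minimum size of a forcing set of $M$. $f(G)$ and $F(G)$ are the minimum and maximum of $f(G,M)$ over all perfect matchings $M$ of $G$. The forcing spectrum of $G$ is the set of forcing numbers of all perfect matchings of $G$; it is continuous if it is an integer interval. *)

theory Defs
  imports Main
begin

definition simple_graph :: "'a set \<Rightarrow> 'a set set \<Rightarrow> bool" where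
  "simple_graph V E \<longleftrightarrow> finite V \<and> (\<forall>e\<in>E. e \<subseteq> V \<and> card e = 2)"

definition perfect_matching :: "'a set \<Rightarrow> 'a set set \<Rightarrow> 'a set set \<Rightarrow> bool" where
  "perfect_matching V E M \<longleftrightarrow> M \<subseteq> E \<and> (\<forall>v\<in>V. \<exists>!e. e \<in> M \<and> v \<in> e)"

definition forcing_set :: "'a set \<Rightarrow> 'a set set \<Rightarrow> 'a set set \<Rightarrow> 'a set set \<Rightarrow> bool" where
  "forcing_set V E M S \<longleftrightarrow> S \<subseteq> M \<and>
     (\<forall>M'. perfect_matching V E M' \<and> S \<subseteq> M' \<longrightarrow> M' = M)"

definition forcing_number :: "'a set \<Rightarrow> 'a set set \<Rightarrow> 'a set set \<Rightarrow> nat" where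
  "forcing_number V E M = Min (card ` {S. forcing_set V E M S})"

definition forcing_spectrum :: "'a set \<Rightarrow> 'a set set \<Rightarrow> nat set" where
  "forcing_spectrum V E = forcing_number V E ` {M. perfect_matching V E M}"

definition min_forcing_number :: "'a set \<Rightarrow> 'a set set \<Rightarrow> nat" where
  "min_forcing_number V E = Min (forcing_spectrum V E)"

definition max_forcing_number :: "'a set \<Rightarrow> 'a set set \<Rightarrow> nat" where
  "max_forcing_number V E = Max (forcing_spectrum V E)"

end

theory Submission
  imports Defs
begin

text \<open>A perfect matching M0 with f(G, M0) = n - 1 is forced by no n - 2 of its edges, so any
  two of its edges cover four vertices carrying a second perfect matching: every two edges of M0
  lie on an M0-alternating 4-cycle. Walking along an alternating cycle of M \<union> M0, this gives one
  or two switches along alternating 4-cycles after which M shares an edge with M0; by induction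
  every perfect matching is joined to M0 by a sequence of such switches. A switch raises the
  forcing number by at most one, since a minimum forcing set meets the two switched edges and
  replacing them by the two new edges gives a forcing set of the new matching. Hence every value
  between f(G) and n - 1 occurs along a switch sequence from a matching of minimum forcing
  number to M0.\<close>

text \<open>Unlike \<open>perfect_matching\<close>, the edges are required to lie inside \<open>W\<close>, so that deleting
  a matched edge leaves a perfect matching of the remaining vertices.\<close>

definition perfect_matching_on :: "'a set \<Rightarrow> 'a set set \<Rightarrow> 'a set set \<Rightarrow> bool" where
  "perfect_matching_on W E M \<longleftrightarrow> perfect_matching W E M \<and> (\<forall>x\<in>M. x \<subseteq> W)"

definition mate :: "'a set set \<Rightarrow> 'a \<Rightarrow> 'a" where
  "mate M v = (THE y. {v, y} \<in> M)"

definition square_switch :: "'a set set \<Rightarrow> 'a set set \<Rightarrow> 'a set set \<Rightarrow> bool" where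
  "square_switch E M M' \<longleftrightarrow> (\<exists>a b c d. distinct [a, b, c, d] \<and> {a, b} \<in> M \<and> {c, d} \<in> M \<and>
     {a, c} \<in> E \<and> {b, d} \<in> E \<and> M' = M - {{a, b}, {c, d}} \<union> {{a, c}, {b, d}})"

definition pairwise_switchable :: "'a set set \<Rightarrow> 'a set set \<Rightarrow> bool" where
  "pairwise_switchable E M \<longleftrightarrow> (\<forall>a b c d. {a, b} \<in> M \<longrightarrow> {c, d} \<in> M \<longrightarrow> distinct [a, b, c, d] \<longrightarrow>
     {a, c} \<in> E \<and> {b, d} \<in> E \<or> {a, d} \<in> E \<and> {b, c} \<in> E)"

lemma square_switchI:
  assumes "distinct [a, b, c, d]" "{a, b} \<in> M" "{c, d} \<in> M" "{a, c} \<in> E" "{b, d} \<in> E"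
  shows "square_switch E M (M - {{a, b}, {c, d}} \<union> {{a, c}, {b, d}})"
  using assms unfolding square_switch_def by blast

lemma square_switch_twice:
  assumes "distinct [x, x', y, y', z, z']" "{x, x'} \<in> M" "{y, y'} \<in> M" "{z, z'} \<in> M"
    and "{x, z'} \<in> E" "{x', z} \<in> E" "{x', y} \<in> E" "{y', z} \<in> E"
  shows "\<exists>M'. (square_switch E)\<^sup>*\<^sup>* M M' \<and> {y', z} \<in> M'"
proof -
  define M1 where "M1 = M - {{x, x'}, {z', z}} \<union> {{x, z'}, {x', z}}"
  define M2 where "M2 = M1 - {{x', z}, {y, y'}} \<union> {{x', y}, {z, y'}}"
  have "square_switch E M M1"
    unfolding M1_def using assms by (intro square_switchI) (auto simp: insert_commute)
  moreover have "{z, y'} \<in> E" using assms(8) by (simp add: insert_commute)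
  then have "square_switch E M1 M2"
    unfolding M2_def using assms by (intro square_switchI) (auto simp: M1_def)
  moreover have "{y', z} \<in> M2"
    unfolding M2_def by (auto simp: insert_commute)
  ultimately show ?thesis
    by (meson converse_rtranclp_into_rtranclp rtranclp.rtrancl_refl)
qed

lemma square_switch_insert:
  assumes "square_switch E M M'" "\<forall>x\<in>M. x \<inter> e = {}" "e \<noteq> {}"
  shows "square_switch E (insert e M) (insert e M') \<and> (\<forall>x\<in>M'. x \<inter> e = {})"
proof -
  obtain a b c d where abcd: "distinct [a, b, c, d]" "{a, b} \<in> M" "{c, d} \<in> M" "{a, c} \<in> E" "{b, d} \<in> E"
    and M': "M' = M - {{a, b}, {c, d}} \<union> {{a, c}, {b, d}}"
    using assms(1) unfolding square_switch_def by blast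
  have outside: "a \<notin> e" "b \<notin> e" "c \<notin> e" "d \<notin> e"
    using assms(2) abcd by auto
  then have "insert e M' = insert e M - {{a, b}, {c, d}} \<union> {{a, c}, {b, d}}"
    using M' assms(3) by auto
  then show ?thesis
    using square_switchI[OF abcd(1)] abcd M' assms(2) outside by auto
qed

lemma square_switches_insert:
  assumes "(square_switch E)\<^sup>*\<^sup>* M M'" "\<forall>x\<in>M. x \<inter> e = {}" "e \<noteq> {}"
  shows "(square_switch E)\<^sup>*\<^sup>* (insert e M) (insert e M')"
proof -
  have "(square_switch E)\<^sup>*\<^sup>* (insert e M) (insert e M') \<and> (\<forall>x\<in>M'. x \<inter> e = {})"
    using assms(1)
  proof (induction rule: rtranclp_induct)
    case base
    then show ?case using assms(2) by simp
  next
    case (step M1 M2)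
    then show ?case
      using square_switch_insert[OF step.hyps(2) _ assms(3)] by (meson rtranclp.rtrancl_into_rtrancl)
  qed
  then show ?thesis ..
qed

locale card2_edges =
  fixes E :: "'a set set"
  assumes card_edge: "x \<in> E \<Longrightarrow> card x = 2"
begin

lemma perfect_matching_onD:
  assumes "perfect_matching_on W E M"
  shows "M \<subseteq> E" "x \<in> M \<Longrightarrow> x \<subseteq> W" "v \<in> W \<Longrightarrow> \<exists>!x. x \<in> M \<and> v \<in> x"
  using assms unfolding perfect_matching_on_def perfect_matching_def by blast+

lemma matching_edgeE:
  assumes "perfect_matching_on W E M" "x \<in> M"
  obtains a b where "a \<noteq> b" "x = {a, b}"
  using assms card_edge perfect_matching_onD(1) by (metis card_2_iff subsetD)

lemma matching_edge_unique:
  assumes "perfect_matching_on W E M" "x \<in> M" "y \<in> M" "v \<in> x" "v \<in> y"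
  shows "x = y"
  using assms perfect_matching_onD(2,3) by blast

lemma mate_eq:
  assumes M: "perfect_matching_on W E M" and "{v, y} \<in> M"
  shows "mate M v = y"
  unfolding mate_def
proof (rule the_equality)
  fix z assume z: "{v, z} \<in> M"
  obtain a b where "a \<noteq> b" "{v, z} = {a, b}" using matching_edgeE[OF M z] .
  then have "z \<noteq> v" by auto
  moreover have "{v, z} = {v, y}" using matching_edge_unique[OF M z assms(2)] by blast
  ultimately show "z = y" by (auto simp: doubleton_eq_iff)
qed (use assms in simp)

lemma mate_unique:
  assumes M: "perfect_matching_on W E M" and "{v, y} \<in> M" "{v, z} \<in> M"
  shows "y = z"
  using mate_eq[OF M assms(2)] mate_eq[OF M assms(3)] by simp

lemma matching_edge_neq:
  assumes "perfect_matching_on W E M" "{a, b} \<in> M"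
  shows "a \<noteq> b"
  using assms card_edge[of "{a, b}"] perfect_matching_onD(1) by fastforce

lemma mate_edge:
  assumes M: "perfect_matching_on W E M" and "v \<in> W"
  shows "{v, mate M v} \<in> M"
proof -
  obtain x where x: "x \<in> M" "v \<in> x" using perfect_matching_onD(3)[OF M assms(2)] by blast
  obtain a b where "x = {a, b}" using matching_edgeE[OF M x(1)] by blast
  then have "{v, if v = a then b else a} \<in> M" using x by (auto simp: insert_commute)
  then show ?thesis using mate_eq[OF M] by simp
qed

lemma mate_properties:
  assumes M: "perfect_matching_on W E M" and "v \<in> W"
  shows "mate M v \<noteq> v" "mate M v \<in> W" "mate M (mate M v) = v"
proof -
  have edge: "{v, mate M v} \<in> M" using mate_edge[OF assms] .
  show "mate M v \<noteq> v" using matching_edge_neq[OF M edge] by simp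
  show "mate M v \<in> W" using perfect_matching_onD(2)[OF M edge] by simp
  show "mate M (mate M v) = v" using mate_eq[OF M, of "mate M v" v] edge by (simp add: insert_commute)
qed

lemma matching_edges_distinct:
  assumes M: "perfect_matching_on W E M" and "{a, b} \<in> M" "{c, d} \<in> M" "a \<notin> {c, d}"
  shows "distinct [a, b, c, d]"
proof -
  have "a \<noteq> b" "c \<noteq> d" using matching_edge_neq[OF M] assms(2,3) by blast+
  moreover have "b \<notin> {c, d}"
  proof
    assume "b \<in> {c, d}"
    then have "{a, b} = {c, d}" using matching_edge_unique[OF M assms(2,3)] by blast
    then show False using assms(4) by auto
  qed
  ultimately show ?thesis using assms(4) by auto
qed

lemma perfect_matching_on_square_switch:
  assumes M: "perfect_matching_on W E M" and switch: "square_switch E M M'"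
  shows "perfect_matching_on W E M'"
proof -
  obtain a b c d where abcd: "distinct [a, b, c, d]" "{a, b} \<in> M" "{c, d} \<in> M"
      "{a, c} \<in> E" "{b, d} \<in> E"
    and M': "M' = M - {{a, b}, {c, d}} \<union> {{a, c}, {b, d}}"
    using switch unfolding square_switch_def by blast
  have in_W: "a \<in> W" "b \<in> W" "c \<in> W" "d \<in> W"
    using perfect_matching_onD(2)[OF M] abcd(2,3) by auto
  have covers: "\<exists>!x. x \<in> M' \<and> v \<in> x" if "v \<in> W" for v
  proof (cases "v \<in> {a, b, c, d}")
    case True
    have "x \<in> {{a, b}, {c, d}}" if "x \<in> M" "v \<in> x" for x
      using True that matching_edge_unique[OF M _ abcd(2)] matching_edge_unique[OF M _ abcd(3)] by blast
    then have new: "x \<in> {{a, c}, {b, d}}" if "x \<in> M'" "v \<in> x" for x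
      using that M' by blast
    show ?thesis
    proof (rule ex_ex1I)
      show "\<exists>x. x \<in> M' \<and> v \<in> x" using True M' by auto
    next
      fix x y assume "x \<in> M' \<and> v \<in> x" "y \<in> M' \<and> v \<in> y"
      then show "x = y" using new[of x] new[of y] abcd(1) by auto
    qed
  next
    case False
    obtain x where x: "x \<in> M" "v \<in> x" using perfect_matching_onD(3)[OF M \<open>v \<in> W\<close>] by blast
    have "y = x" if "y \<in> M'" "v \<in> y" for y
    proof -
      have "y \<in> M" using that M' False by auto
      then show ?thesis using matching_edge_unique[OF M _ x(1) that(2) x(2)] by simp
    qed
    moreover have "x \<in> M'" using x False M' by auto
    ultimately show ?thesis using x by blast
  qed
  have "M' \<subseteq> E" using perfect_matching_onD(1)[OF M] abcd(4,5) M' by blast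
  moreover have "\<forall>x\<in>M'. x \<subseteq> W" using perfect_matching_onD(2)[OF M] in_W M' by blast
  ultimately show ?thesis
    using covers unfolding perfect_matching_on_def perfect_matching_def by blast
qed

lemma perfect_matching_on_square_switches:
  assumes "(square_switch E)\<^sup>*\<^sup>* M M'" "perfect_matching_on W E M"
  shows "perfect_matching_on W E M'"
  using assms by induction (auto intro: perfect_matching_on_square_switch)

lemma perfect_matching_on_subset_eq:
  assumes M: "perfect_matching_on W E M" and N: "perfect_matching_on W E N" and "M \<subseteq> N"
  shows "N = M"
proof
  show "N \<subseteq> M"
  proof
    fix x assume x: "x \<in> N"
    obtain a b where "x = {a, b}" using matching_edgeE[OF N x] .
    then have "a \<in> W" "a \<in> x" using perfect_matching_onD(2)[OF N x] by auto
    then obtain y where "y \<in> M" "a \<in> y" using perfect_matching_onD(3)[OF M] by blast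
    then show "x \<in> M" using matching_edge_unique[OF N x _ \<open>a \<in> x\<close>] \<open>M \<subseteq> N\<close> by auto
  qed
qed (use assms in simp)

lemma perfect_matching_on_Diff:
  assumes M: "perfect_matching_on W E M" and e: "e \<in> M"
  shows "perfect_matching_on (W - e) E (M - {e})"
proof -
  have disjoint: "x \<inter> e = {}" if "x \<in> M - {e}" for x
    using matching_edge_unique[OF M, of x e] that e by blast
  have covers: "\<exists>!x. x \<in> M - {e} \<and> v \<in> x" if v: "v \<in> W - e" for v
  proof -
    obtain x where x: "x \<in> M" "v \<in> x" using perfect_matching_onD(3)[OF M] v by blast
    have "x \<in> M - {e}" using v x by auto
    moreover have "y = x" if "y \<in> M - {e}" "v \<in> y" for y
      using matching_edge_unique[OF M _ x(1) that(2) x(2)] that(1) by blast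
    ultimately show ?thesis using x(2) by blast
  qed
  have "M - {e} \<subseteq> E" "\<forall>x\<in>M - {e}. x \<subseteq> W - e"
    using perfect_matching_onD(1,2)[OF M] disjoint by blast+
  then show ?thesis
    unfolding perfect_matching_on_def perfect_matching_def by (intro conjI ballI covers) auto
qed

lemma perfect_matching_on_empty:
  assumes "perfect_matching_on {} E M"
  shows "M = {}"
  using perfect_matching_onD(2)[OF assms] matching_edgeE[OF assms] by blast

lemma edge_of_remaining_pair:
  assumes N: "perfect_matching_on W E N" and "{a, x} \<in> N" "y \<in> W"
    and "mate N y \<in> {a, x, y, z}" "distinct [a, x, y, z]"
  shows "{y, z} \<in> N"
proof -
  have edge: "{y, mate N y} \<in> N" using mate_edge[OF N assms(3)] .
  have "mate N y \<noteq> a"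
    using mate_unique[OF N assms(2), of y] edge assms(5) by (auto simp: insert_commute)
  moreover have "mate N y \<noteq> x"
    using mate_unique[OF N, of x a y] assms(2) edge assms(5) by (auto simp: insert_commute)
  ultimately have "mate N y = z" using assms(4) mate_properties(1)[OF N assms(3)] by auto
  then show ?thesis using edge by simp
qed

lemma crossing_edges_notin:
  assumes M: "perfect_matching_on W E M" and "{a, b} \<in> M" "{c, d} \<in> M" "distinct [a, b, c, d]"
  shows "{a, c} \<notin> M" "{b, d} \<notin> M"
proof -
  show "{a, c} \<notin> M" using mate_unique[OF M assms(2), of c] assms(4) by auto
  have "{b, a} \<in> M" using assms(2) by (simp add: insert_commute)
  then show "{b, d} \<notin> M" using mate_unique[OF M, of b a d] assms(4) by auto
qed

lemma mate_stays_in_square: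
  assumes M0: "perfect_matching_on W E M0" and N: "perfect_matching_on W E N"
    and ab: "{a, b} \<in> M0" and cd: "{c, d} \<in> M0" and agree: "M0 - {{a, b}, {c, d}} \<subseteq> N"
    and v: "v \<in> {a, b, c, d}"
  shows "mate N v \<in> {a, b, c, d}"
proof (rule ccontr)
  let ?x = "mate N v"
  assume outside: "?x \<notin> {a, b, c, d}"
  have Q_W: "{a, b, c, d} \<subseteq> W" using perfect_matching_onD(2)[OF M0] ab cd by auto
  have mate_M0: "mate M0 v \<in> {a, b, c, d}"
    using v mate_eq[OF M0 ab] mate_eq[OF M0 cd] mate_eq[OF M0, of b a] mate_eq[OF M0, of d c]
      ab cd by (auto simp: insert_commute)
  have x_W: "?x \<in> W" using mate_properties(2)[OF N] v Q_W by blast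
  have "{?x, mate M0 ?x} \<in> M0" using mate_edge[OF M0 x_W] .
  moreover have "{?x, mate M0 ?x} \<notin> {{a, b}, {c, d}}" using outside by auto
  ultimately have "{?x, mate M0 ?x} \<in> N" using agree by blast
  moreover have "{?x, v} \<in> N"
    using mate_edge[OF N, of v] v Q_W by (auto simp: insert_commute)
  ultimately have "mate M0 ?x = v" using mate_unique[OF N] by blast
  then have "?x = mate M0 v" using mate_properties(3)[OF M0 x_W] by simp
  then show False using outside mate_M0 by simp
qed

end

text \<open>The walk u 0, w 0, u 1, w 1, \<dots> runs around the cycle of M \<union> M0 through u0, alternating
  the M0-edges {u j, w j} with the M-edges {w j, u (j + 1)}. The cycle may be as short as a
  4-cycle, so in general only walk vertices at distance at most three are known to be distinct;
  further distinctness has to be derived from the absence of chords.\<close>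

locale alternating_walk = card2_edges +
  fixes W :: "'a set" and M M0 :: "'a set set" and u0 :: 'a
  assumes M: "perfect_matching_on W E M" and M0: "perfect_matching_on W E M0"
    and disjoint: "M \<inter> M0 = {}" and switchable: "pairwise_switchable E M0"
    and u0: "u0 \<in> W"
begin

definition u :: "nat \<Rightarrow> 'a" where
  "u j = ((mate M \<circ> mate M0) ^^ j) u0"

definition w :: "nat \<Rightarrow> 'a" where
  "w j = mate M0 (u j)"

lemma u_Suc: "u (j + 1) = mate M (w j)"
  unfolding u_def w_def by simp

lemma u_in: "u j \<in> W"
proof (induction j)
  case 0
  then show ?case using u0 by (simp add: u_def)
next
  case (Suc j)
  then show ?case
    using u_Suc[of j] mate_properties(2)[OF M] mate_properties(2)[OF M0] by (simp add: w_def)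
qed

lemma w_in: "w j \<in> W"
  unfolding w_def using mate_properties(2)[OF M0 u_in] .

lemma M0_edge: "{u j, w j} \<in> M0"
  unfolding w_def using mate_edge[OF M0 u_in] .

lemma M_edge: "{w j, u (j + 1)} \<in> M"
  unfolding u_Suc using mate_edge[OF M w_in] .

lemma M_edge_commute: "{u (j + 1), w j} \<in> M"
  using M_edge by (simp add: insert_commute)

lemma M0_subset: "M0 \<subseteq> E"
  using perfect_matching_onD(1)[OF M0] .

lemma mate_M0_w: "mate M0 (w j) = u j"
  using mate_eq[OF M0, of "w j" "u j"] M0_edge by (simp add: insert_commute)

lemma mate_M_u: "mate M (u (j + 1)) = w j"
  using mate_eq[OF M M_edge_commute] .

lemma distinct_u_w_window: "distinct [u j, w j, u (j + 1), w (j + 1)]"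
proof -
  have "mate M (w j) \<noteq> mate M0 (w j)"
    using mate_edge[OF M w_in, of j] mate_edge[OF M0 w_in, of j] disjoint by (metis disjoint_iff)
  then have "u j \<noteq> u (j + 1)" using u_Suc mate_M0_w by metis
  moreover have "u j \<noteq> w (j + 1)"
  proof
    assume "u j = w (j + 1)"
    then have "w j = u (j + 1)" using mate_M0_w w_def by metis
    then show False using matching_edge_neq[OF M M_edge] by simp
  qed
  ultimately show ?thesis using matching_edges_distinct[OF M0 M0_edge M0_edge] by simp
qed

lemma distinct_w_u_window: "distinct [w j, u (j + 1), w (j + 1), u (j + 2)]"
proof -
  have "w j \<noteq> w (j + 1)"
    using distinct_u_w_window[of j] mate_M0_w[of j] mate_M0_w[of "j + 1"] by auto
  moreover have "w j \<noteq> u (j + 2)"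
    using distinct_u_w_window[of "j + 1"] u_Suc[of j] mate_M_u[of "j + 1"] by auto
  ultimately show ?thesis using matching_edges_distinct[OF M M_edge M_edge, of j "j + 1"] by simp
qed

lemma M0_edges_distinct: "u i \<notin> {u k, w k} \<Longrightarrow> distinct [u i, w i, u k, w k]"
  using matching_edges_distinct[OF M0 M0_edge M0_edge] .

lemma parallel_or_crossed:
  assumes "u i \<notin> {u k, w k}"
  shows "{u i, u k} \<in> E \<and> {w i, w k} \<in> E \<or> {u i, w k} \<in> E \<and> {w i, u k} \<in> E"
  using switchable M0_edge[of i] M0_edge[of k] M0_edges_distinct[OF assms]
  unfolding pairwise_switchable_def by blast

abbreviation common_edge_reachable :: bool where
  "common_edge_reachable \<equiv> \<exists>M'. (square_switch E)\<^sup>*\<^sup>* M M' \<and> M' \<inter> M0 \<noteq> {}"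

lemma common_edge_from_chord_w_u2:
  assumes chord: "{w j, u (j + 2)} \<in> E"
  shows common_edge_reachable
proof -
  have "square_switch E M (M - {{w j, u (j + 1)}, {u (j + 2), w (j + 1)}} \<union>
      {{w j, u (j + 2)}, {u (j + 1), w (j + 1)}})"
  proof (rule square_switchI)
    show "distinct [w j, u (j + 1), u (j + 2), w (j + 1)]"
      using distinct_w_u_window[of j] by auto
    show "{u (j + 2), w (j + 1)} \<in> M" using M_edge_commute[of "j + 1"] by simp
    show "{u (j + 1), w (j + 1)} \<in> E" using M0_edge M0_subset by blast
  qed (use M_edge chord in auto)
  moreover have "{u (j + 1), w (j + 1)} \<in> M0" using M0_edge .
  ultimately show ?thesis by blast
qed

lemma distinct_two_apart:
  assumes "{w j, u (j + 2)} \<notin> E"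
  shows "distinct [u j, w j, u (j + 2), w (j + 2)]"
proof (rule M0_edges_distinct)
  have "u j \<noteq> u (j + 2)"
    using assms M0_edge[of j] M0_subset by (metis insert_commute subsetD)
  moreover have "u j \<noteq> w (j + 2)"
    using distinct_w_u_window[of j] mate_M0_w[of "j + 2"] w_def[of j] by auto
  ultimately show "u j \<notin> {u (j + 2), w (j + 2)}" by simp
qed

lemma parallel_two_apart:
  assumes "{w j, u (j + 2)} \<notin> E"
  shows "{u j, u (j + 2)} \<in> E \<and> {w j, w (j + 2)} \<in> E"
  using parallel_or_crossed[of j "j + 2"] distinct_two_apart[OF assms] assms by auto

lemma distinct_six:
  assumes "\<And>i. {w i, u (i + 2)} \<notin> E"
  shows "distinct [w j, u (j + 1), w (j + 1), u (j + 2), w (j + 2), u (j + 3)]"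
proof -
  have "w j \<noteq> u (j + 3)"
    using distinct_u_w_window[of "j + 1"] u_Suc[of j] mate_M_u[of "j + 2"]
    by (auto simp: eval_nat_numeral)
  moreover have "distinct [u (j + 1), w (j + 1), u (j + 3), w (j + 3)]"
    using distinct_two_apart[OF assms, of "j + 1"] by (simp add: eval_nat_numeral)
  ultimately show ?thesis
    using distinct_u_w_window[of "j + 1"] distinct_w_u_window[of j] distinct_w_u_window[of "j + 1"]
      distinct_two_apart[OF assms, of j]
    by (auto simp: eval_nat_numeral)
qed

lemma common_edge_from_chord_w_w1:
  assumes no_chords: "\<And>i. {w i, u (i + 2)} \<notin> E" and chord: "{w j, w (j + 1)} \<in> E"
  shows common_edge_reachable
proof -
  have "{u (j + 1), w j} \<in> M" "{w (j + 1), u (j + 2)} \<in> M" "{w (j + 2), u (j + 3)} \<in> M"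
    using M_edge_commute[of j] M_edge[of "j + 1"] M_edge[of "j + 2"] by (simp_all add: eval_nat_numeral)
  moreover have "distinct [u (j + 1), w j, w (j + 1), u (j + 2), w (j + 2), u (j + 3)]"
    using distinct_six[OF no_chords, of j] by auto
  moreover have "{u (j + 1), u (j + 3)} \<in> E"
    using parallel_two_apart[OF no_chords, of "j + 1"] by (simp add: eval_nat_numeral)
  moreover have "{w j, w (j + 2)} \<in> E" using parallel_two_apart[OF no_chords] by simp
  moreover have "{u (j + 2), w (j + 2)} \<in> E" using M0_edge M0_subset by blast
  ultimately obtain M' where "(square_switch E)\<^sup>*\<^sup>* M M'" "{u (j + 2), w (j + 2)} \<in> M'"
    using chord square_switch_twice[of "u (j + 1)" "w j" "w (j + 1)" "u (j + 2)" "w (j + 2)" "u (j + 3)"]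
    by blast
  then show ?thesis using M0_edge by blast
qed

lemma common_edge_from_chord_w_u3:
  assumes no_chords: "\<And>i. {w i, u (i + 2)} \<notin> E"
    and chords: "{w j, u (j + 3)} \<in> E" "{u (j + 1), w (j + 2)} \<in> E"
  shows common_edge_reachable
proof -
  have "{w j, u (j + 1)} \<in> M" "{w (j + 1), u (j + 2)} \<in> M" "{w (j + 2), u (j + 3)} \<in> M"
    using M_edge[of j] M_edge[of "j + 1"] M_edge[of "j + 2"] by (simp_all add: eval_nat_numeral)
  moreover have "distinct [w j, u (j + 1), w (j + 1), u (j + 2), w (j + 2), u (j + 3)]"
    using distinct_six[OF no_chords] .
  moreover have "{u (j + 1), w (j + 1)} \<in> E" "{u (j + 2), w (j + 2)} \<in> E"
    using M0_edge M0_subset by blast+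
  ultimately obtain M' where "(square_switch E)\<^sup>*\<^sup>* M M'" "{u (j + 2), w (j + 2)} \<in> M'"
    using chords square_switch_twice[of "w j" "u (j + 1)" "w (j + 1)" "u (j + 2)" "w (j + 2)" "u (j + 3)"]
    by blast
  then show ?thesis using M0_edge by blast
qed

lemma common_edge_without_chords:
  assumes no_chords: "\<And>i. {w i, u (i + 2)} \<notin> E" "\<And>i. {w i, w (i + 1)} \<notin> E"
    "\<And>i. {w i, u (i + 3)} \<notin> E"
  shows common_edge_reachable
proof -
  have far3: "distinct [u j, w j, u (j + 3), w (j + 3)]" for j
  proof (rule M0_edges_distinct)
    have "u j \<noteq> u (j + 3)"
    proof
      assume "u j = u (j + 3)"
      then have "w j = w (j + 3)" by (simp add: w_def)
      moreover have "{w (j + 2), w (j + 3)} \<notin> E"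
        using no_chords(2)[of "j + 2"] by (simp add: eval_nat_numeral)
      ultimately show False
        using parallel_two_apart[OF no_chords(1), of j] by (metis insert_commute)
    qed
    moreover have "u j \<noteq> w (j + 3)"
      using distinct_six[OF no_chords(1)] mate_M0_w[of "j + 3"] w_def[of j] by auto
    ultimately show "u j \<notin> {u (j + 3), w (j + 3)}" by simp
  qed
  have parallel3: "{u j, u (j + 3)} \<in> E \<and> {w j, w (j + 3)} \<in> E" for j
    using parallel_or_crossed[of j "j + 3"] far3[of j] no_chords(3)[of j] by auto
  have "w 0 \<noteq> u 4"
    using distinct_two_apart[OF no_chords(1), of 1] u_Suc[of 0] mate_M_u[of 3]
    by (auto simp: eval_nat_numeral)
  then have "distinct [u 1, w 0, w 2, u 3, w 3, u 4]"
    using distinct_u_w_window[of 1] distinct_u_w_window[of 2] distinct_u_w_window[of 3]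
      distinct_w_u_window[of 0] distinct_w_u_window[of 2] distinct_two_apart[OF no_chords(1)]
      far3[of 0] far3[of 1] distinct_six[OF no_chords(1), of 0]
    by (auto simp: eval_nat_numeral)
  moreover have "{u 1, w 0} \<in> M" "{w 2, u 3} \<in> M" "{w 3, u 4} \<in> M"
    using M_edge_commute[of 0] M_edge[of 2] M_edge[of 3] by simp_all
  moreover have "{u 3, w 3} \<in> E" using M0_edge M0_subset by blast
  moreover have "{u 1, u 4} \<in> E" "{w 0, w 3} \<in> E" "{w 0, w 2} \<in> E"
    using parallel3[of 1] parallel3[of 0] parallel_two_apart[OF no_chords(1), of 0]
    by (simp_all add: eval_nat_numeral)
  ultimately obtain M' where "(square_switch E)\<^sup>*\<^sup>* M M'" "{u 3, w 3} \<in> M'"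
    using square_switch_twice[of "u 1" "w 0" "w 2" "u 3" "w 3" "u 4"] by blast
  then show ?thesis using M0_edge by blast
qed

lemma common_edge_is_reachable: common_edge_reachable
proof (cases "\<exists>j. {w j, u (j + 2)} \<in> E")
  case True
  then show ?thesis using common_edge_from_chord_w_u2 by blast
next
  case False
  then have no_chords2: "{w j, u (j + 2)} \<notin> E" for j by blast
  show ?thesis
  proof (cases "\<exists>j. {w j, w (j + 1)} \<in> E")
    case True
    then show ?thesis using common_edge_from_chord_w_w1 no_chords2 by blast
  next
    case False
    then have crossed: "{u j, w (j + 1)} \<in> E" for j
      using parallel_or_crossed[of j "j + 1"] distinct_u_w_window[of j] by auto
    show ?thesis
    proof (cases "\<exists>j. {w j, u (j + 3)} \<in> E")
      case True
      then obtain j where "{w j, u (j + 3)} \<in> E" by blast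
      moreover have "{u (j + 1), w (j + 2)} \<in> E"
        using crossed[of "j + 1"] by (simp add: eval_nat_numeral)
      ultimately show ?thesis using common_edge_from_chord_w_u3 no_chords2 by blast
    next
      case False
      then show ?thesis
        using common_edge_without_chords no_chords2 \<open>\<nexists>j. {w j, w (j + 1)} \<in> E\<close> by blast
    qed
  qed
qed

end

lemma (in card2_edges) square_switches_add_common_edge:
  assumes M: "perfect_matching_on W E M" and "e \<in> M" "e \<in> M0"
    and "(square_switch E)\<^sup>*\<^sup>* (M - {e}) (M0 - {e})"
  shows "(square_switch E)\<^sup>*\<^sup>* M M0"
proof -
  have "\<forall>x\<in>M - {e}. x \<inter> e = {}"
    using matching_edge_unique[OF M _ \<open>e \<in> M\<close>] by blast
  moreover have "e \<noteq> {}" using matching_edgeE[OF M \<open>e \<in> M\<close>] by blast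
  ultimately have "(square_switch E)\<^sup>*\<^sup>* (insert e (M - {e})) (insert e (M0 - {e}))"
    by (rule square_switches_insert[OF assms(4)])
  then show ?thesis using \<open>e \<in> M\<close> \<open>e \<in> M0\<close> by (simp add: insert_absorb)
qed

lemma (in card2_edges) square_switches_to_pairwise_switchable:
  assumes "finite W" "perfect_matching_on W E M" "perfect_matching_on W E M0"
    and "pairwise_switchable E M0"
  shows "(square_switch E)\<^sup>*\<^sup>* M M0"
  using assms
proof (induction "card W" arbitrary: W M M0 rule: less_induct)
  case less
  have via_common_edge: "(square_switch E)\<^sup>*\<^sup>* M' M0"
    if M': "perfect_matching_on W E M'" and "e \<in> M'" "e \<in> M0" for M' e
  proof (rule square_switches_add_common_edge[OF M' that(2,3)])
    obtain a b where "e = {a, b}" using matching_edgeE[OF M' \<open>e \<in> M'\<close>] .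
    then have "card (W - e) < card W"
      using perfect_matching_onD(2)[OF M' \<open>e \<in> M'\<close>] less.prems(1) by (intro psubset_card_mono) auto
    moreover have "pairwise_switchable E (M0 - {e})"
      using less.prems(4) unfolding pairwise_switchable_def by blast
    ultimately show "(square_switch E)\<^sup>*\<^sup>* (M' - {e}) (M0 - {e})"
      using less.hyps[of "W - e" "M' - {e}" "M0 - {e}"] less.prems(1)
        perfect_matching_on_Diff[OF M' \<open>e \<in> M'\<close>] perfect_matching_on_Diff[OF less.prems(3) \<open>e \<in> M0\<close>]
      by blast
  qed
  show ?case
  proof (cases "M \<inter> M0 = {}")
    case False
    then show ?thesis using via_common_edge less.prems(2) by blast
  next
    case True
    show ?thesis
    proof (cases "W = {}")
      case True
      then have "M = {}" "M0 = {}"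
        using perfect_matching_on_empty less.prems(2,3) by blast+
      then show ?thesis by simp
    next
      case False
      then obtain u0 where "u0 \<in> W" by blast
      with True less.prems interpret alternating_walk E W M M0 u0
        by unfold_locales auto
      obtain M' e where M': "(square_switch E)\<^sup>*\<^sup>* M M'" and "e \<in> M'" "e \<in> M0"
        using common_edge_is_reachable by blast
      moreover have "perfect_matching_on W E M'"
        using perfect_matching_on_square_switches[OF M' less.prems(2)] .
      ultimately have "(square_switch E)\<^sup>*\<^sup>* M' M0"
        using via_common_edge by blast
      with M' show ?thesis by (rule rtranclp_trans)
    qed
  qed
qed

locale finite_graph = card2_edges +
  fixes V :: "'a set"
  assumes finite_vertices: "finite V" and edge_subset: "x \<in> E \<Longrightarrow> x \<subseteq> V"
begin

lemma perfect_matching_on_iff: "perfect_matching_on V E M \<longleftrightarrow> perfect_matching V E M"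
  using edge_subset unfolding perfect_matching_on_def perfect_matching_def by blast

lemma finite_edges: "finite E"
  using finite_vertices edge_subset by (meson PowI finite_Pow_iff finite_subset subsetI)

lemma finite_perfect_matchings: "finite {M. perfect_matching V E M}"
proof (rule finite_subset)
  show "{M. perfect_matching V E M} \<subseteq> Pow E" unfolding perfect_matching_def by auto
qed (simp add: finite_edges)

lemma finite_perfect_matching: "perfect_matching V E M \<Longrightarrow> finite M"
  using finite_edges unfolding perfect_matching_def by (meson finite_subset)

lemma perfect_matching_square_switches:
  "(square_switch E)\<^sup>*\<^sup>* M M' \<Longrightarrow> perfect_matching V E M \<Longrightarrow> perfect_matching V E M'"
  using perfect_matching_on_square_switches perfect_matching_on_iff by blast

lemma forcing_set_self: "perfect_matching V E M \<Longrightarrow> forcing_set V E M M"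
  unfolding forcing_set_def using perfect_matching_on_subset_eq perfect_matching_on_iff by blast

lemma finite_forcing_set_cards:
  assumes "perfect_matching V E M"
  shows "finite (card ` {S. forcing_set V E M S})"
proof -
  have "{S. forcing_set V E M S} \<subseteq> Pow M" unfolding forcing_set_def by blast
  then show ?thesis
    using finite_perfect_matching[OF assms] by (meson finite_Pow_iff finite_imageI finite_subset)
qed

lemma forcing_number_le:
  "perfect_matching V E M \<Longrightarrow> forcing_set V E M S \<Longrightarrow> forcing_number V E M \<le> card S"
  unfolding forcing_number_def using finite_forcing_set_cards by simp

lemma minimum_forcing_set:
  assumes "perfect_matching V E M"
  obtains S where "forcing_set V E M S" "card S = forcing_number V E M"
proof -
  have "forcing_number V E M \<in> card ` {S. forcing_set V E M S}"
    unfolding forcing_number_def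
    using finite_forcing_set_cards[OF assms] forcing_set_self[OF assms] by (intro Min_in) auto
  then show ?thesis using that by force
qed

lemma forcing_set_square_switch:
  assumes M: "perfect_matching V E M"
    and abcd: "distinct [a, b, c, d]" "{a, b} \<in> M" "{c, d} \<in> M" "{a, c} \<in> E" "{b, d} \<in> E"
    and S: "forcing_set V E M S"
  shows "forcing_set V E (M - {{a, b}, {c, d}} \<union> {{a, c}, {b, d}})
    (S - {{a, b}, {c, d}} \<union> {{a, c}, {b, d}})"
  unfolding forcing_set_def
proof (intro conjI allI impI)
  have M_on: "perfect_matching_on V E M" using M perfect_matching_on_iff by simp
  define old new where "old = {{a, b}, {c, d}}" and "new = {{a, c}, {b, d}}"
  have "S \<subseteq> M" using S unfolding forcing_set_def by blast
  then show "S - {{a, b}, {c, d}} \<union> {{a, c}, {b, d}} \<subseteq> M - {{a, b}, {c, d}} \<union> {{a, c}, {b, d}}"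
    by blast
  fix N assume N: "perfect_matching V E N \<and> S - {{a, b}, {c, d}} \<union> {{a, c}, {b, d}} \<subseteq> N"
  then have N_on: "perfect_matching_on V E N" and ac_bd: "{a, c} \<in> N" "{b, d} \<in> N"
    using perfect_matching_on_iff by auto
  have "{a, b} \<in> E" "{c, d} \<in> E" using M abcd(2,3) unfolding perfect_matching_def by auto
  then have "square_switch E N (N - new \<union> old)"
    using square_switchI[of a c b d N E] abcd(1) ac_bd unfolding new_def old_def by auto
  then have "perfect_matching V E (N - new \<union> old)"
    using perfect_matching_square_switches N by blast
  moreover have "new \<inter> M = {}"
    using crossing_edges_notin[OF M_on abcd(2,3,1)] unfolding new_def by blast
  then have "S \<subseteq> N - new \<union> old"
    using N \<open>S \<subseteq> M\<close> unfolding old_def new_def by blast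
  ultimately have "N - new \<union> old = M"
    using S unfolding forcing_set_def by blast
  moreover have "old \<inter> N = {}"
    using crossing_edges_notin[OF N_on ac_bd] abcd(1) unfolding old_def by auto
  ultimately show "N = M - {{a, b}, {c, d}} \<union> {{a, c}, {b, d}}"
    using ac_bd unfolding old_def new_def by blast
qed

lemma forcing_number_square_switch_le:
  assumes M: "perfect_matching V E M" and switch: "square_switch E M M'"
  shows "forcing_number V E M' \<le> forcing_number V E M + 1"
proof -
  obtain a b c d where abcd: "distinct [a, b, c, d]" "{a, b} \<in> M" "{c, d} \<in> M"
      "{a, c} \<in> E" "{b, d} \<in> E"
    and M': "M' = M - {{a, b}, {c, d}} \<union> {{a, c}, {b, d}}"
    using switch unfolding square_switch_def by blast
  have M'_pm: "perfect_matching V E M'"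
    using perfect_matching_square_switches switch M by blast
  obtain S where S: "forcing_set V E M S" "card S = forcing_number V E M"
    using minimum_forcing_set[OF M] .
  have "S \<subseteq> M" using S(1) unfolding forcing_set_def by blast
  have "S \<inter> {{a, b}, {c, d}} \<noteq> {}"
  proof
    assume "S \<inter> {{a, b}, {c, d}} = {}"
    then have "S \<subseteq> M'" using \<open>S \<subseteq> M\<close> M' by blast
    then have "M' = M" using S(1) M'_pm unfolding forcing_set_def by blast
    moreover have "perfect_matching_on V E M" using M perfect_matching_on_iff by simp
    then have "{a, c} \<notin> M" using crossing_edges_notin(1)[OF _ abcd(2,3,1)] by blast
    ultimately show False using M' by blast
  qed
  define S' where "S' = S - {{a, b}, {c, d}} \<union> {{a, c}, {b, d}}"
  have "card (S - {{a, b}, {c, d}}) < card S"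
    using \<open>S \<inter> {{a, b}, {c, d}} \<noteq> {}\<close> \<open>S \<subseteq> M\<close> finite_perfect_matching[OF M]
    by (intro psubset_card_mono) (auto intro: finite_subset)
  moreover have "card S' \<le> card (S - {{a, b}, {c, d}}) + card {{a, c}, {b, d}}"
    unfolding S'_def by (rule card_Un_le)
  moreover have "card {{a, c}, {b, d}} \<le> 2" by (simp add: card_insert_le_m1)
  moreover have "forcing_number V E M' \<le> card S'"
    using forcing_number_le[OF M'_pm] forcing_set_square_switch[OF M abcd S(1)] M'
    unfolding S'_def by blast
  ultimately show ?thesis using S(2) by linarith
qed

lemma card_perfect_matching:
  assumes M: "perfect_matching V E M"
  shows "card V = 2 * card M"
proof -
  have M_on: "perfect_matching_on V E M" using M perfect_matching_on_iff by simp
  have "\<Union>M = V" using perfect_matching_onD(2,3)[OF M_on] by blast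
  moreover have "card (\<Union>M) = sum card M"
  proof (rule card_Union_disjoint)
    show "pairwise disjnt M"
      using matching_edge_unique[OF M_on] unfolding pairwise_def disjnt_def by blast
    show "finite x" if "x \<in> M" for x
      using perfect_matching_onD(2)[OF M_on that] finite_vertices finite_subset by blast
  qed
  moreover have "sum card M = sum (\<lambda>_. 2) M"
    using card_edge perfect_matching_onD(1)[OF M_on] by (intro sum.cong) auto
  ultimately show ?thesis by simp
qed

lemma pairwise_switchable_if_card_le:
  assumes M0: "perfect_matching V E M0" and large: "card M0 \<le> forcing_number V E M0 + 1"
  shows "pairwise_switchable E M0"
  unfolding pairwise_switchable_def
proof (intro allI impI)
  fix a b c d assume ab: "{a, b} \<in> M0" and cd: "{c, d} \<in> M0" and abcd: "distinct [a, b, c, d]"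
  have M0_on: "perfect_matching_on V E M0" using M0 perfect_matching_on_iff by simp
  define S where "S = M0 - {{a, b}, {c, d}}"
  have "card {{a, b}, {c, d}} = 2" using abcd by (auto simp: doubleton_eq_iff)
  then have "card S + 2 = card M0"
    using ab cd finite_perfect_matching[OF M0] unfolding S_def
    by (metis card_Diff_subset card_mono empty_subsetI finite_subset insert_subset le_add_diff_inverse2)
  then have "\<not> forcing_set V E M0 S" using forcing_number_le[OF M0] large by fastforce
  then obtain N where N: "perfect_matching V E N" "S \<subseteq> N" "N \<noteq> M0"
    unfolding forcing_set_def S_def by blast
  have N_on: "perfect_matching_on V E N" using N(1) perfect_matching_on_iff by simp
  note mate_Q = mate_stays_in_square[OF M0_on N_on ab cd N(2)[unfolded S_def]]
  have Q_V: "{a, b, c, d} \<subseteq> V" using perfect_matching_onD(2)[OF M0_on] ab cd by auto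
  then have a_V: "a \<in> V" by simp
  have a_N: "{a, mate N a} \<in> N" using mate_edge[OF N_on a_V] .
  have "mate N a \<in> {b, c, d}" using mate_Q[of a] mate_properties(1)[OF N_on a_V] by auto
  then consider "mate N a = b" | "mate N a = c" | "mate N a = d" by blast
  then show "{a, c} \<in> E \<and> {b, d} \<in> E \<or> {a, d} \<in> E \<and> {b, c} \<in> E"
  proof cases
    case 1
    then have "{c, d} \<in> N"
      using edge_of_remaining_pair[OF N_on, of a b c d] a_N mate_Q[of c] Q_V abcd by auto
    then have "M0 \<subseteq> N" using N(2) a_N 1 unfolding S_def by auto
    then show ?thesis using perfect_matching_on_subset_eq[OF M0_on N_on] N(3) by blast
  next
    case 2
    then have "{b, d} \<in> N"
      using edge_of_remaining_pair[OF N_on, of a c b d] a_N mate_Q[of b] Q_V abcd by auto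
    then show ?thesis using a_N 2 perfect_matching_onD(1)[OF N_on] by auto
  next
    case 3
    then have "{b, c} \<in> N"
      using edge_of_remaining_pair[OF N_on, of a d b c] a_N mate_Q[of b] Q_V abcd by auto
    then show ?thesis using a_N 3 perfect_matching_onD(1)[OF N_on] by auto
  qed
qed

lemma forcing_spectrum_between:
  assumes "(square_switch E)\<^sup>*\<^sup>* A B" and A: "perfect_matching V E A"
    and "forcing_number V E A \<le> k" "k \<le> forcing_number V E B"
  shows "k \<in> forcing_spectrum V E"
  using assms(1,3,4)
proof (induction rule: rtranclp_induct)
  case base
  then show ?case using A unfolding forcing_spectrum_def by auto
next
  case (step y z)
  show ?case
  proof (cases "k \<le> forcing_number V E y")
    case True
    then show ?thesis using step.IH step.prems(1) by blast
  next
    case False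
    have y: "perfect_matching V E y" using perfect_matching_square_switches[OF step.hyps(1) A] .
    then have "perfect_matching V E z"
      using perfect_matching_square_switches step.hyps(2) by blast
    moreover have "k = forcing_number V E z"
      using forcing_number_square_switch_le[OF y step.hyps(2)] False step.prems(2) by linarith
    ultimately show ?thesis unfolding forcing_spectrum_def by blast
  qed
qed

end

theorem theorem5p9:
  fixes V :: "'a set" and E :: "'a set set" and n :: nat
  assumes "simple_graph V E"
    and "n \<ge> 1"
    and "card V = 2 * n"
    and "\<exists>M. perfect_matching V E M"
    and "max_forcing_number V E = n - 1"
  shows "forcing_spectrum V E = {min_forcing_number V E .. n - 1}"
proof -
  interpret finite_graph E V
    using assms(1) unfolding simple_graph_def by unfold_locales auto
  have finite: "finite (forcing_spectrum V E)" and nonempty: "forcing_spectrum V E \<noteq> {}"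
    using finite_perfect_matchings assms(4) unfolding forcing_spectrum_def by auto
  obtain M1 where M1: "perfect_matching V E M1" "forcing_number V E M1 = min_forcing_number V E"
    using Min_in[OF finite nonempty] unfolding min_forcing_number_def forcing_spectrum_def by auto
  obtain M0 where M0: "perfect_matching V E M0" "forcing_number V E M0 = n - 1"
    using Max_in[OF finite nonempty] assms(5) unfolding max_forcing_number_def forcing_spectrum_def
    by auto
  have "card M0 = n" using card_perfect_matching[OF M0(1)] assms(3) by simp
  then have "pairwise_switchable E M0" using pairwise_switchable_if_card_le[OF M0(1)] M0(2) by simp
  then have "(square_switch E)\<^sup>*\<^sup>* M1 M0"
    using square_switches_to_pairwise_switchable finite_vertices M1(1) M0(1) perfect_matching_on_iff
    by blast
  then have "{min_forcing_number V E .. n - 1} \<subseteq> forcing_spectrum V E"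
    using forcing_spectrum_between M1 M0(2) by auto
  moreover have "forcing_spectrum V E \<subseteq> {min_forcing_number V E .. n - 1}"
    using Min_le[OF finite] Max_ge[OF finite] assms(5)
    unfolding min_forcing_number_def max_forcing_number_def by auto
  ultimately show ?thesis by blast
qed

end
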